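(* Let $0\le\sigma_1<\sigma_2\le1/2$, $0\le\varepsilon_1<\varepsilon_2\le1/2$, $q\in(0,1)$ and $Q=(1-q)\mathrm B(\sigma_1)+q\,\mathrm B(\sigma_2)\in\mathbb B_2^*$. There exists $p\in(0,1)$ such that $W=(1-p)\mathrm B(\varepsilon_1)+p\,\mathrm B(\varepsilon_2)$ is a 4-P-degradation of $Q$ if and only if $$\sigma_1\le\varepsilon_1<(1-q)\sigma_1+q\sigma_2<\varepsilon_2\le\sigma_2 .$$ In that case $p$ is the unique number with $(1-p)\varepsilon_1+p\varepsilon_2=(1-q)\sigma_1+q\sigma_2$.
   Context: A BIDMC $W$ has input uniform on $\{0,1\}$, discrete output alphabet $\mathcal Y$ and transition probabilities $\Pr(y\mid x)$; its LR-profile is $P_W(\varepsilon)=\Pr\big(\mathcal L_W(y)=\varepsilon/(1-\varepsilon)\big)$ with $\mathcal L_W(\hat y)=\Pr(y=\hat y\mid x=0)/\Pr(y=\hat y\mid x=1)$, and $W\cong W'$ if LR-profiles coincide. $W'\preccurlyeq W$ if there is a channel $T$ from the output alphabet of $W$ to that of $W'$ with $\Pr(y'\mid x'=a)=\sum_{y}\Pr(y\mid x=a)T(y'\mid y)$. $\mathrm B(\varepsilon)$ is the BSC with crossover probability $\varepsilon$; $\sum_iq_iW_i$ denotes the random switching channel (use $W_i$ with probability $q_i$ independently of the input and output the index $i$ along with the output). $\mathbb B_n$ is the set of BIDMCs equivalent to $\sum_{i\in[n]}p_i\mathrm B(\varepsilon_i)$ for a probability vector $(p_i)$ and $\varepsilon_i\in[0,1]$;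 $\mathbb B_n^*=\mathbb B_n\setminus\mathbb B_{n-1}$. $P_\epsilon(W)=\frac12\sum_{y}\min\{\Pr(y\mid x=0),\Pr(y\mid x=1)\}$. For a symmetric BIDMC $Q$ and $n\ge1$, $W$ is a $2n$-P-degradation of $Q$ if $W\in\mathbb B_n$, $W\preccurlyeq Q$ and $P_\epsilon(W)=\min\{P_\epsilon(W'):W'\in\mathbb B_n,\ W'\preccurlyeq Q\}$. *)

theory Defs
  imports "HOL-Probability.Probability"
begin

text \<open>The input bit 0 is
  represented by False and 1 by True; the (discrete, i.e. countable) output
  alphabet is encoded into nat.\<close>
type_synonym bidmc = "bool \<Rightarrow> nat pmf"

text \<open>LR-profile: P_W(e) = Pr(L_W(y) = e/(1-e)) with y the output under a uniform
  input. For outputs of positive probability, L_W(y) = e/(1-e) (with the extended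
  convention a/0 = infinity) is written cross-multiplied:
  Pr(y|0) * (1-e) = e * Pr(y|1).\<close>
definition lr_profile :: "bidmc \<Rightarrow> real \<Rightarrow> real" where
  "lr_profile W e =
     (let S = {y. pmf (W False) y + pmf (W True) y > 0 \<and>
                  pmf (W False) y * (1 - e) = e * pmf (W True) y}
      in (measure_pmf.prob (W False) S + measure_pmf.prob (W True) S) / 2)"

definition chan_equiv :: "bidmc \<Rightarrow> bidmc \<Rightarrow> bool" where
  "chan_equiv W W' \<longleftrightarrow> lr_profile W = lr_profile W'"

definition degraded :: "bidmc \<Rightarrow> bidmc \<Rightarrow> bool" where
  "degraded W' W \<longleftrightarrow> (\<exists>T :: nat \<Rightarrow> nat pmf. \<forall>x. W' x = bind_pmf (W x) T)"

definition BSC :: "real \<Rightarrow> bidmc" where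
  "BSC e x = map_pmf (\<lambda>b. if b \<noteq> x then 1 else 0) (bernoulli_pmf e)"

text \<open>Random switching channel sum_{i<n} p_i W_i: choose index i with probability
  p i, use W i, output the pair (i, y) (encoded into nat).\<close>
definition switch :: "nat \<Rightarrow> (nat \<Rightarrow> real) \<Rightarrow> (nat \<Rightarrow> bidmc) \<Rightarrow> bidmc" where
  "switch n p Ws x =
     bind_pmf (embed_pmf (\<lambda>i. if i < n then p i else 0))
       (\<lambda>i. map_pmf (\<lambda>y. prod_encode (i, y)) (Ws i x))"

definition prob_vec :: "nat \<Rightarrow> (nat \<Rightarrow> real) \<Rightarrow> bool" where
  "prob_vec n p \<longleftrightarrow> (\<forall>i<n. 0 \<le> p i) \<and> (\<Sum>i<n. p i) = 1"

definition in_B :: "nat \<Rightarrow> bidmc \<Rightarrow> bool" where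
  "in_B n W \<longleftrightarrow> (\<exists>p e. prob_vec n p \<and> (\<forall>i<n. 0 \<le> e i \<and> e i \<le> 1) \<and>
                         chan_equiv W (switch n p (\<lambda>i. BSC (e i))))"

definition in_B_star :: "nat \<Rightarrow> bidmc \<Rightarrow> bool" where
  "in_B_star n W \<longleftrightarrow> in_B n W \<and> \<not> in_B (n - 1) W"

definition P_err :: "bidmc \<Rightarrow> real" where
  "P_err W = (\<Sum>y. min (pmf (W False) y) (pmf (W True) y)) / 2"

definition P_degradation :: "nat \<Rightarrow> bidmc \<Rightarrow> bidmc \<Rightarrow> bool" where
  "P_degradation n Q W \<longleftrightarrow> in_B n W \<and> degraded W Q \<and>
     (\<forall>W'. in_B n W' \<and> degraded W' Q \<longrightarrow> P_err W \<le> P_err W')"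

definition mix2 :: "real \<Rightarrow> real \<Rightarrow> real \<Rightarrow> bidmc" where
  "mix2 a e1 e2 = switch 2 (\<lambda>i. if i = 0 then 1 - a else a)
                           (\<lambda>i. BSC (if i = 0 then e1 else e2))"

end

theory Submission
  imports Defs
begin

(*
  Data processing: if W is degraded with respect to Q then, for every prior \<pi> on the input,
  the Bayes error of guessing the input from the output of W is at least that of Q. For a mixture
  of BSCs with crossovers at most 1/2 the Bayes error at prior \<pi> is \<Sum>i p_i min(\<epsilon>_i, \<pi>); at
  \<pi> = 1/2 this is the mean crossover, i.e. P_epsilon.

  Since Q itself lies in B_2, a 4-P-degradation W of Q has P_epsilon(W) = P_epsilon(Q), so W and Q
  have the same mean crossover; comparing the Bayes errors at \<pi> = \<sigma>1 and \<pi> = \<sigma>2 then gives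
  \<sigma>1 \<le> \<epsilon>1 and \<epsilon>2 \<le> \<sigma>2. Conversely, under these conditions W is obtained from Q by keeping the
  BSC output bit and randomly relabelling the component index: the output law of B(s) is affine
  in s, so it suffices that each new component receives the right total weight and mean crossover.
*)

lemma sums_pmf_one: "pmf (M :: nat pmf) sums 1"
proof -
  have "pmf M sums (integral\<^sup>L (count_space UNIV) (pmf M))"
    by (rule sums_integral_count_space_nat) (rule integrable_pmf)
  then show ?thesis by (simp add: integral_pmf)
qed

lemma pmf_map_bernoulli:
  assumes "0 \<le> t" "t \<le> 1"
  shows "pmf (map_pmf f (bernoulli_pmf t)) y
    = (if f True = y then t else 0) + (if f False = y then 1 - t else 0)"
proof -
  have "pmf (map_pmf f (bernoulli_pmf t)) y = (\<Sum>b\<in>f -` {y}. pmf (bernoulli_pmf t) b)"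
    unfolding pmf_map by (rule measure_measure_pmf_finite) simp
  also have "\<dots> = (\<Sum>b\<in>UNIV. if f b = y then pmf (bernoulli_pmf t) b else 0)"
    by (simp add: vimage_def flip: sum.inter_filter)
  finally show ?thesis using assms by (simp add: UNIV_bool)
qed

lemma pmf_map_prod_encode_fixed_fst:
  "pmf (map_pmf (\<lambda>b. prod_encode (i, b)) M) (prod_encode (j, b')) = (if i = j then pmf M b' else 0)"
proof (cases "i = j")
  case True
  then show ?thesis using pmf_map_inj'[of "\<lambda>b. prod_encode (i, b)" M b'] by (simp add: inj_def)
next
  case False
  then show ?thesis by (auto intro!: pmf_map_outside)
qed

lemma pmf_map_prod_encode_fixed_snd:
  "pmf (map_pmf (\<lambda>i. prod_encode (i, b)) M) (prod_encode (j, b')) = (if b = b' then pmf M j else 0)"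
proof (cases "b = b'")
  case True
  then show ?thesis using pmf_map_inj'[of "\<lambda>i. prod_encode (i, b)" M j] by (simp add: inj_def)
next
  case False
  then show ?thesis by (auto intro!: pmf_map_outside)
qed

lemma sum_prod_encode_image:
  "(\<Sum>z\<in>prod_encode ` (I \<times> B). f z) = (\<Sum>i\<in>I. \<Sum>b\<in>B. f (prod_encode (i, b)))"
  by (simp add: sum.reindex inj_prod_encode sum.cartesian_product)

lemma pmf_bind_finite_support:
  assumes "finite S" "set_pmf M \<subseteq> S"
  shows "pmf (bind_pmf M f) y = (\<Sum>z\<in>S. pmf M z * pmf (f z) y)"
  unfolding pmf_bind using assms
  by (subst integral_measure_pmf_real[of S]) (auto simp: mult.commute)

lemma pmf_BSC:
  assumes "0 \<le> e" "e \<le> 1"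
  shows "pmf (BSC e x) y = (if y = of_bool x then 1 - e else if y = of_bool (\<not> x) then e else 0)"
  using assms by (cases x) (auto simp: BSC_def pmf_map_bernoulli)

lemma pmf_BSC_affine:
  assumes "0 \<le> e" "e \<le> 1"
  shows "pmf (BSC e x) y = (1 - e) * pmf (BSC 0 x) y + e * pmf (BSC 1 x) y"
  using assms by (simp add: pmf_BSC)

lemma set_pmf_BSC: "set_pmf (BSC e x) \<subseteq> {0, 1}"
  by (auto simp: BSC_def)

lemma pmf_switch:
  assumes "prob_vec n p"
  shows "pmf (switch n p Ws x) (prod_encode (i, y)) = (if i < n then p i else 0) * pmf (Ws i x) y"
proof -
  define w where "w = (\<lambda>k. if k < n then p k else 0)"
  have w_nonneg: "0 \<le> w k" for k
    using assms by (simp add: w_def prob_vec_def)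
  have "(\<integral>\<^sup>+k. ennreal (w k) \<partial>count_space UNIV) = (\<Sum>k<n. ennreal (w k))"
    unfolding nn_integral_count_space_nat by (rule suminf_finite) (auto simp: w_def)
  also have "\<dots> = ennreal (\<Sum>k<n. p k)"
    using assms unfolding prob_vec_def w_def by (subst sum_ennreal) auto
  also have "\<dots> = 1"
    using assms by (simp add: prob_vec_def)
  finally have pmf_w: "pmf (embed_pmf w) k = w k" for k
    by (rule pmf_embed_pmf[OF w_nonneg])
  have "pmf (switch n p Ws x) (prod_encode (i, y))
      = (\<integral>k. pmf (map_pmf (\<lambda>b. prod_encode (k, b)) (Ws k x)) (prod_encode (i, y)) \<partial>embed_pmf w)"
    by (simp add: switch_def pmf_bind w_def)
  also have "\<dots> = pmf (Ws i x) y * w i"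
    by (subst integral_measure_pmf_real[of "{i}"]) (auto simp: pmf_map_prod_encode_fixed_fst pmf_w split: if_splits)
  finally show ?thesis by (simp add: w_def)
qed

lemma set_pmf_switch:
  assumes "prob_vec n p" "\<And>i. i < n \<Longrightarrow> set_pmf (Ws i x) \<subseteq> B"
  shows "set_pmf (switch n p Ws x) \<subseteq> prod_encode ` ({..<n} \<times> B)"
proof
  fix z assume z: "z \<in> set_pmf (switch n p Ws x)"
  obtain i y where z_eq: "z = prod_encode (i, y)"
    by (metis prod_decode_inverse surj_pair)
  with z have "i < n" "y \<in> set_pmf (Ws i x)"
    by (auto simp: set_pmf_iff pmf_switch[OF assms(1)] split: if_splits)
  with assms(2) z_eq show "z \<in> prod_encode ` ({..<n} \<times> B)" by blast
qed

lemma prob_vec_two: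
  assumes "0 \<le> a" "a \<le> 1"
  shows "prob_vec 2 (\<lambda>i. if i = 0 then 1 - a else a)"
  using assms by (simp add: prob_vec_def lessThan_Suc numeral_2_eq_2)

lemma in_B_mix2:
  assumes "0 \<le> a" "a \<le> 1" "0 \<le> e1" "e1 \<le> 1" "0 \<le> e2" "e2 \<le> 1"
  shows "in_B 2 (mix2 a e1 e2)"
  unfolding in_B_def mix2_def chan_equiv_def
  using assms prob_vec_two[of a] by (intro exI[of _ "\<lambda>i. if i = 0 then e1 else e2"] exI) auto

lemma set_pmf_mix2:
  assumes "0 \<le> a" "a \<le> 1"
  shows "set_pmf (mix2 a e1 e2 x) \<subseteq> prod_encode ` ({..<2} \<times> {0, 1})"
  unfolding mix2_def using prob_vec_two[OF assms] set_pmf_BSC by (rule set_pmf_switch)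

definition bayes_error :: "real \<Rightarrow> bidmc \<Rightarrow> real" where
  "bayes_error \<pi> W = (\<Sum>y. min ((1 - \<pi>) * pmf (W False) y) (\<pi> * pmf (W True) y))"

lemma bayes_error_finite_support:
  assumes "finite S" "\<And>x. set_pmf (W x) \<subseteq> S"
  shows "bayes_error \<pi> W = (\<Sum>y\<in>S. min ((1 - \<pi>) * pmf (W False) y) (\<pi> * pmf (W True) y))"
proof -
  have "pmf (W x) y = 0" if "y \<notin> S" for x y
    using assms(2)[of x] that by (auto simp: set_pmf_iff)
  then show ?thesis
    unfolding bayes_error_def using assms(1) by (intro suminf_finite) auto
qed

lemma summable_min_pmf:
  assumes "0 \<le> c" "0 \<le> d"
  shows "summable (\<lambda>y. min (c * pmf (W False) y) (d * pmf (W True) y))"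
proof (rule summable_comparison_test')
  show "summable (\<lambda>y. c * pmf (W False) y)"
    using sums_summable[OF sums_pmf_one] by (rule summable_mult)
qed (use assms in auto)

lemma P_err_eq_bayes_error: "P_err W = bayes_error (1/2) W"
proof -
  have "bayes_error (1/2) W = (\<Sum>y. min (pmf (W False) y) (pmf (W True) y) / 2)"
    unfolding bayes_error_def by (simp add: min_divide_distrib_right)
  also have "\<dots> = P_err W"
    unfolding P_err_def using summable_min_pmf[of 1 1 W] by (simp add: suminf_divide)
  finally show ?thesis ..
qed

lemma bayes_error_degraded:
  assumes "degraded W Q" "finite S" "\<And>x. set_pmf (Q x) \<subseteq> S" "0 \<le> \<pi>" "\<pi> \<le> 1"
  shows "bayes_error \<pi> Q \<le> bayes_error \<pi> W"
proof -
  obtain T where W: "\<And>x. W x = bind_pmf (Q x) T"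
    using assms(1) unfolding degraded_def by blast
  define m where "m z = min ((1 - \<pi>) * pmf (Q False) z) (\<pi> * pmf (Q True) z)" for z
  have pmf_W: "pmf (W x) y = (\<Sum>z\<in>S. pmf (Q x) z * pmf (T z) y)" for x y
    unfolding W using assms(2,3) by (rule pmf_bind_finite_support)
  have sums_m: "(\<lambda>y. \<Sum>z\<in>S. m z * pmf (T z) y) sums (\<Sum>z\<in>S. m z)"
    using sums_mult[OF sums_pmf_one] by (intro sums_sum) simp
  have sums_W: "(\<lambda>y. min ((1 - \<pi>) * pmf (W False) y) (\<pi> * pmf (W True) y)) sums bayes_error \<pi> W"
    unfolding bayes_error_def using summable_min_pmf[of "1 - \<pi>" \<pi> W] assms(4,5)
    by (simp add: summable_sums)
  have le: "(\<Sum>z\<in>S. m z * pmf (T z) y)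
      \<le> min ((1 - \<pi>) * pmf (W False) y) (\<pi> * pmf (W True) y)" for y
  proof -
    have "(\<Sum>z\<in>S. m z * pmf (T z) y) \<le> (\<Sum>z\<in>S. (1 - \<pi>) * pmf (Q False) z * pmf (T z) y)"
      unfolding m_def by (intro sum_mono mult_right_mono) simp_all
    moreover have "(\<Sum>z\<in>S. m z * pmf (T z) y) \<le> (\<Sum>z\<in>S. \<pi> * pmf (Q True) z * pmf (T z) y)"
      unfolding m_def by (intro sum_mono mult_right_mono) simp_all
    ultimately show ?thesis
      unfolding pmf_W sum_distrib_left by (simp add: mult.assoc)
  qed
  show ?thesis
    using sums_le[OF le sums_m sums_W] bayes_error_finite_support[OF assms(2,3)] by (simp add: m_def)
qed

lemma bayes_error_switch:
  assumes "prob_vec n p" "finite B" "\<And>i x. i < n \<Longrightarrow> set_pmf (Ws i x) \<subseteq> B"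
  shows "bayes_error \<pi> (switch n p Ws) = (\<Sum>i<n. p i * bayes_error \<pi> (Ws i))"
proof -
  have p_nonneg: "i < n \<Longrightarrow> 0 \<le> p i" for i
    using assms(1) by (simp add: prob_vec_def)
  have "bayes_error \<pi> (switch n p Ws)
      = (\<Sum>i<n. \<Sum>b\<in>B. min ((1 - \<pi>) * (p i * pmf (Ws i False) b)) (\<pi> * (p i * pmf (Ws i True) b)))"
    using assms by (simp add: bayes_error_finite_support[of "prod_encode ` ({..<n} \<times> B)"]
        set_pmf_switch sum_prod_encode_image pmf_switch)
  also have "\<dots> = (\<Sum>i<n. p i * (\<Sum>b\<in>B. min ((1 - \<pi>) * pmf (Ws i False) b) (\<pi> * pmf (Ws i True) b)))"
    using p_nonneg by (simp add: sum_distrib_left min_mult_distrib_left mult.left_commute)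
  also have "\<dots> = (\<Sum>i<n. p i * bayes_error \<pi> (Ws i))"
    using assms(2,3) by (simp add: bayes_error_finite_support)
  finally show ?thesis .
qed

lemma bayes_error_BSC:
  assumes "0 \<le> e" "0 \<le> \<pi>" "e + \<pi> \<le> 1"
  shows "bayes_error \<pi> (BSC e) = min e \<pi>"
proof -
  have "bayes_error \<pi> (BSC e) = min ((1 - \<pi>) * (1 - e)) (\<pi> * e) + min ((1 - \<pi>) * e) (\<pi> * (1 - e))"
    using assms by (simp add: bayes_error_finite_support[OF _ set_pmf_BSC] pmf_BSC)
  also have "\<dots> = \<pi> * e + min ((1 - \<pi>) * e) (\<pi> * (1 - e))"
    using assms mult_mono[of \<pi> "1 - e" e "1 - \<pi>"] by (simp add: min_def algebra_simps)
  also have "\<dots> = min e \<pi>"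
    by (simp add: min_def algebra_simps)
  finally show ?thesis .
qed

lemma bayes_error_mix2:
  assumes "0 \<le> a" "a \<le> 1" "0 \<le> e1" "0 \<le> e2" "0 \<le> \<pi>" "e1 + \<pi> \<le> 1" "e2 + \<pi> \<le> 1"
  shows "bayes_error \<pi> (mix2 a e1 e2) = (1 - a) * min e1 \<pi> + a * min e2 \<pi>"
proof -
  have "bayes_error \<pi> (mix2 a e1 e2)
      = (\<Sum>i<2::nat. (if i = 0 then 1 - a else a) * bayes_error \<pi> (BSC (if i = 0 then e1 else e2)))"
    unfolding mix2_def using prob_vec_two[OF assms(1,2)]
    by (rule bayes_error_switch[where B = "{0, 1}"]) (simp, rule set_pmf_BSC)
  then show ?thesis
    using assms by (simp add: bayes_error_BSC numeral_2_eq_2 lessThan_Suc)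
qed

lemma P_err_mix2:
  assumes "0 \<le> a" "a \<le> 1" "0 \<le> e1" "e1 \<le> 1/2" "0 \<le> e2" "e2 \<le> 1/2"
  shows "P_err (mix2 a e1 e2) = (1 - a) * e1 + a * e2"
  using assms by (simp add: P_err_eq_bayes_error bayes_error_mix2)

lemma degraded_refl: "degraded W W"
  unfolding degraded_def by (intro exI[of _ return_pmf]) (simp add: bind_return_pmf')

lemma P_degradation_iff:
  assumes "in_B n Q" "finite S" "\<And>x. set_pmf (Q x) \<subseteq> S"
  shows "P_degradation n Q W \<longleftrightarrow> in_B n W \<and> degraded W Q \<and> P_err W = P_err Q"
proof -
  have P_err_le: "P_err Q \<le> P_err W'" if "degraded W' Q" for W'
    unfolding P_err_eq_bayes_error using that assms(2,3) by (rule bayes_error_degraded) simp_all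
  show ?thesis
    unfolding P_degradation_def using assms(1) degraded_refl P_err_le by (metis order.antisym order.refl)
qed

lemma mix2_degraded_imp_crossover_bounds:
  assumes deg: "degraded (mix2 p e1 e2) (mix2 q \<sigma>1 \<sigma>2)"
    and "0 < p" "p < 1" "0 \<le> q" "q \<le> 1"
    and "0 \<le> \<sigma>1" "\<sigma>1 \<le> \<sigma>2" "\<sigma>2 \<le> 1/2" "0 \<le> e1" "e1 \<le> 1/2" "0 \<le> e2" "e2 \<le> 1/2"
    and mean: "(1 - p) * e1 + p * e2 = (1 - q) * \<sigma>1 + q * \<sigma>2"
  shows "\<sigma>1 \<le> e1 \<and> e2 \<le> \<sigma>2"
proof -
  have DPI: "bayes_error \<pi> (mix2 q \<sigma>1 \<sigma>2) \<le> bayes_error \<pi> (mix2 p e1 e2)"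
    if "0 \<le> \<pi>" "\<pi> \<le> 1/2" for \<pi>
    using deg _ set_pmf_mix2 by (rule bayes_error_degraded) (use assms that in auto)
  have "bayes_error \<sigma>1 (mix2 q \<sigma>1 \<sigma>2) = \<sigma>1"
    using assms by (simp add: bayes_error_mix2 min_def algebra_simps)
  then have at_\<sigma>1: "\<sigma>1 \<le> (1 - p) * min e1 \<sigma>1 + p * min e2 \<sigma>1"
    using DPI[of \<sigma>1] assms by (simp add: bayes_error_mix2)
  have "bayes_error \<sigma>2 (mix2 q \<sigma>1 \<sigma>2) = (1 - q) * \<sigma>1 + q * \<sigma>2"
    using assms by (simp add: bayes_error_mix2 min_def)
  then have at_\<sigma>2: "(1 - q) * \<sigma>1 + q * \<sigma>2 \<le> (1 - p) * min e1 \<sigma>2 + p * min e2 \<sigma>2"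
    using DPI[of \<sigma>2] assms by (simp add: bayes_error_mix2)
  have "\<sigma>1 \<le> e1"
  proof (rule ccontr)
    assume "\<not> \<sigma>1 \<le> e1"
    then have "(1 - p) * min e1 \<sigma>1 < (1 - p) * \<sigma>1" using assms by simp
    moreover have "p * min e2 \<sigma>1 \<le> p * \<sigma>1" using assms by (simp add: mult_left_mono)
    ultimately show False using at_\<sigma>1 by (simp add: algebra_simps)
  qed
  moreover have "e2 \<le> \<sigma>2"
  proof (rule ccontr)
    assume "\<not> e2 \<le> \<sigma>2"
    then have "p * min e2 \<sigma>2 < p * e2" using assms by simp
    moreover have "(1 - p) * min e1 \<sigma>2 \<le> (1 - p) * e1" using assms by (simp add: mult_left_mono)
    ultimately show False using at_\<sigma>2 mean by simp
  qed
  ultimately show ?thesis ..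
qed

lemma switch_BSC_degraded_by_relabelling:
  fixes w v \<sigma> e :: "nat \<Rightarrow> real" and \<tau> :: "nat \<Rightarrow> nat pmf"
  assumes w: "prob_vec n w" and v: "prob_vec m v"
    and \<sigma>: "\<And>i. i < n \<Longrightarrow> 0 \<le> \<sigma> i \<and> \<sigma> i \<le> 1"
    and e: "\<And>j. j < m \<Longrightarrow> 0 \<le> e j \<and> e j \<le> 1"
    and \<tau>: "\<And>i. i < n \<Longrightarrow> set_pmf (\<tau> i) \<subseteq> {..<m}"
    and weight: "\<And>j. j < m \<Longrightarrow> (\<Sum>i<n. w i * pmf (\<tau> i) j) = v j"
    and crossover: "\<And>j. j < m \<Longrightarrow> (\<Sum>i<n. w i * pmf (\<tau> i) j * \<sigma> i) = v j * e j"
  shows "degraded (switch m v (\<lambda>j. BSC (e j))) (switch n w (\<lambda>i. BSC (\<sigma> i)))"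
proof -
  define T where "T z = (case prod_decode z of (i, b) \<Rightarrow> map_pmf (\<lambda>j. prod_encode (j, b)) (\<tau> i))" for z
  have "switch m v (\<lambda>j. BSC (e j)) x = bind_pmf (switch n w (\<lambda>i. BSC (\<sigma> i)) x) T" for x
  proof (rule pmf_eqI)
    fix y
    obtain j b where y: "y = prod_encode (j, b)"
      by (metis prod_decode_inverse surj_pair)
    define A where "A = pmf (BSC 0 x) b"
    define B where "B = pmf (BSC 1 x) b"
    have BSC_affine: "pmf (BSC s x) b = A + s * (B - A)" if "0 \<le> s" "s \<le> 1" for s
      unfolding A_def B_def using pmf_BSC_affine[OF that] by (simp add: algebra_simps)
    have supp: "set_pmf (switch n w (\<lambda>i. BSC (\<sigma> i)) x) \<subseteq> prod_encode ` ({..<n} \<times> {0, 1})"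
      using w set_pmf_BSC by (rule set_pmf_switch)
    have "pmf (bind_pmf (switch n w (\<lambda>i. BSC (\<sigma> i)) x) T) y
        = (\<Sum>i<n. \<Sum>b'\<in>{0, 1}. w i * pmf (BSC (\<sigma> i) x) b' * pmf (T (prod_encode (i, b'))) y)"
      by (simp add: pmf_bind_finite_support[OF _ supp] sum_prod_encode_image pmf_switch[OF w])
    also have "\<dots> = (\<Sum>i<n. w i * pmf (\<tau> i) j * pmf (BSC (\<sigma> i) x) b)"
      using set_pmf_BSC[of _ x]
      by (intro sum.cong) (auto simp: T_def y pmf_map_prod_encode_fixed_snd set_pmf_eq)
    also have "\<dots> = pmf (switch m v (\<lambda>j. BSC (e j)) x) y"
    proof (cases "j < m")
      case True
      have "(\<Sum>i<n. w i * pmf (\<tau> i) j * pmf (BSC (\<sigma> i) x) b)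
          = (\<Sum>i<n. w i * pmf (\<tau> i) j * A + w i * pmf (\<tau> i) j * \<sigma> i * (B - A))"
        using \<sigma> by (intro sum.cong) (simp_all add: BSC_affine algebra_simps)
      also have "\<dots> = (\<Sum>i<n. w i * pmf (\<tau> i) j) * A + (\<Sum>i<n. w i * pmf (\<tau> i) j * \<sigma> i) * (B - A)"
        by (simp add: sum.distrib sum_distrib_right)
      also have "\<dots> = v j * pmf (BSC (e j) x) b"
        unfolding weight[OF True] crossover[OF True] using e[OF True] by (simp add: BSC_affine algebra_simps)
      finally show ?thesis
        using True v by (simp add: y pmf_switch)
    next
      case False
      then have "pmf (\<tau> i) j = 0" if "i < n" for i
        using \<tau>[OF that] by (auto simp: set_pmf_iff)
      then show ?thesis
        using False v by (simp add: y pmf_switch)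
    qed
    finally show "pmf (switch m v (\<lambda>j. BSC (e j)) x) y = pmf (bind_pmf (switch n w (\<lambda>i. BSC (\<sigma> i)) x) T) y" ..
  qed
  then show ?thesis unfolding degraded_def by blast
qed

lemma mix2_degraded_if_crossovers_between:
  assumes q: "0 < q" "q < 1" and p: "0 \<le> p" "p \<le> 1" and \<sigma>: "0 \<le> \<sigma>1" "\<sigma>1 < \<sigma>2" "\<sigma>2 \<le> 1"
    and e: "\<sigma>1 \<le> e1" "e1 \<le> \<sigma>2" "\<sigma>1 \<le> e2" "e2 \<le> \<sigma>2"
    and mean: "(1 - p) * e1 + p * e2 = (1 - q) * \<sigma>1 + q * \<sigma>2"
  shows "degraded (mix2 p e1 e2) (mix2 q \<sigma>1 \<sigma>2)"
proof -
  \<comment> \<open>Component i is relabelled as component 1 with probability t i. The weights so moved,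
    p (\<sigma>2 - e2) / (\<sigma>2 - \<sigma>1) and p (e2 - \<sigma>1) / (\<sigma>2 - \<sigma>1), add up to p and average \<sigma>1, \<sigma>2 to e2.\<close>
  define t :: "nat \<Rightarrow> real" where
    "t i = (if i = 0 then p * (\<sigma>2 - e2) / ((1 - q) * (\<sigma>2 - \<sigma>1)) else p * (e2 - \<sigma>1) / (q * (\<sigma>2 - \<sigma>1)))" for i
  define \<tau> :: "nat \<Rightarrow> nat pmf" where "\<tau> i = map_pmf of_bool (bernoulli_pmf (t i))" for i
  have lower: "(1 - q) * (\<sigma>2 - \<sigma>1) = (1 - p) * (\<sigma>2 - e1) + p * (\<sigma>2 - e2)"
    and upper: "q * (\<sigma>2 - \<sigma>1) = (1 - p) * (e1 - \<sigma>1) + p * (e2 - \<sigma>1)"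
    using mean by (simp_all add: algebra_simps)
  have "p * (\<sigma>2 - e2) \<le> (1 - q) * (\<sigma>2 - \<sigma>1)" "p * (e2 - \<sigma>1) \<le> q * (\<sigma>2 - \<sigma>1)"
    unfolding lower upper using p e by simp_all
  then have t: "0 \<le> t i" "t i \<le> 1" for i
    using p q \<sigma> e by (simp_all add: t_def)
  have pmf_\<tau>: "pmf (\<tau> i) j = (if j = 1 then t i else if j = 0 then 1 - t i else 0)" for i j
    using t by (simp add: \<tau>_def pmf_map_bernoulli)
  have flow_from_\<sigma>1: "(1 - q) * t 0 = p * (\<sigma>2 - e2) / (\<sigma>2 - \<sigma>1)"
    and flow_from_\<sigma>2: "q * t 1 = p * (e2 - \<sigma>1) / (\<sigma>2 - \<sigma>1)"
    using q by (simp_all add: t_def)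
  have "\<sigma>2 - \<sigma>1 \<noteq> 0"
    using \<sigma> by simp
  then have flow: "(1 - q) * t 0 + q * t 1 = p" "(1 - q) * t 0 * \<sigma>1 + q * t 1 * \<sigma>2 = p * e2"
    unfolding flow_from_\<sigma>1 flow_from_\<sigma>2 by (simp_all add: divide_simps) (simp_all add: algebra_simps)
  show ?thesis
    unfolding mix2_def
  proof (rule switch_BSC_degraded_by_relabelling[where \<tau> = \<tau>])
    show "set_pmf (\<tau> i) \<subseteq> {..<2}" for i
      by (auto simp: \<tau>_def)
    show "(\<Sum>i<2. (if i = 0 then 1 - q else q) * pmf (\<tau> i) j) = (if j = 0 then 1 - p else p)"
      if "j < 2" for j
      using that flow by (auto simp: pmf_\<tau> numeral_2_eq_2 less_Suc_eq algebra_simps)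
    show "(\<Sum>i<2. (if i = 0 then 1 - q else q) * pmf (\<tau> i) j * (if i = 0 then \<sigma>1 else \<sigma>2))
        = (if j = 0 then 1 - p else p) * (if j = 0 then e1 else e2)" if "j < 2" for j
      using that flow mean by (auto simp: pmf_\<tau> numeral_2_eq_2 less_Suc_eq algebra_simps)
  qed (use p q \<sigma> e in \<open>auto intro: prob_vec_two\<close>)
qed

lemma mix2_degraded_iff_crossover_bounds:
  assumes "0 < p" "p < 1" "0 < q" "q < 1"
    and "0 \<le> \<sigma>1" "\<sigma>1 < \<sigma>2" "\<sigma>2 \<le> 1/2" "0 \<le> e1" "e1 < e2" "e2 \<le> 1/2"
    and "(1 - p) * e1 + p * e2 = (1 - q) * \<sigma>1 + q * \<sigma>2"
  shows "degraded (mix2 p e1 e2) (mix2 q \<sigma>1 \<sigma>2) \<longleftrightarrow> \<sigma>1 \<le> e1 \<and> e2 \<le> \<sigma>2"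
proof
  assume "degraded (mix2 p e1 e2) (mix2 q \<sigma>1 \<sigma>2)"
  then show "\<sigma>1 \<le> e1 \<and> e2 \<le> \<sigma>2"
    by (rule mix2_degraded_imp_crossover_bounds) (use assms in simp_all)
next
  assume "\<sigma>1 \<le> e1 \<and> e2 \<le> \<sigma>2"
  then show "degraded (mix2 p e1 e2) (mix2 q \<sigma>1 \<sigma>2)"
    by (intro mix2_degraded_if_crossovers_between) (use assms in simp_all)
qed

lemma mix2_P_degradation_iff:
  assumes "in_B 2 (mix2 q \<sigma>1 \<sigma>2)" "0 \<le> q" "q \<le> 1" "0 \<le> p" "p \<le> 1"
    and "0 \<le> \<sigma>1" "\<sigma>1 \<le> 1/2" "0 \<le> \<sigma>2" "\<sigma>2 \<le> 1/2" "0 \<le> e1" "e1 \<le> 1/2" "0 \<le> e2" "e2 \<le> 1/2"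
  shows "P_degradation 2 (mix2 q \<sigma>1 \<sigma>2) (mix2 p e1 e2)
    \<longleftrightarrow> degraded (mix2 p e1 e2) (mix2 q \<sigma>1 \<sigma>2) \<and> (1 - p) * e1 + p * e2 = (1 - q) * \<sigma>1 + q * \<sigma>2"
proof -
  have "finite (prod_encode ` ({..<2} \<times> {0, 1}))"
    by simp
  moreover have "set_pmf (mix2 q \<sigma>1 \<sigma>2 x) \<subseteq> prod_encode ` ({..<2} \<times> {0, 1})" for x
    using assms(2,3) by (rule set_pmf_mix2)
  ultimately have "P_degradation 2 (mix2 q \<sigma>1 \<sigma>2) (mix2 p e1 e2)
      \<longleftrightarrow> in_B 2 (mix2 p e1 e2) \<and> degraded (mix2 p e1 e2) (mix2 q \<sigma>1 \<sigma>2)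
        \<and> P_err (mix2 p e1 e2) = P_err (mix2 q \<sigma>1 \<sigma>2)"
    by (rule P_degradation_iff[OF assms(1)])
  then show ?thesis
    using assms by (simp add: in_B_mix2 P_err_mix2)
qed

lemma between_iff_convex_combination:
  fixes a b m :: real
  assumes "a < b"
  shows "a < m \<and> m < b \<longleftrightarrow> (\<exists>p. 0 < p \<and> p < 1 \<and> (1 - p) * a + p * b = m)"
  using assms open_segment_eq_real_ivl[of a b] in_segment(2)[of m a b] by (auto simp: eq_commute)

theorem lemma5:
  fixes \<sigma>1 \<sigma>2 \<epsilon>1 \<epsilon>2 q :: real
  assumes "0 \<le> \<sigma>1" "\<sigma>1 < \<sigma>2" "\<sigma>2 \<le> 1/2"
    and "0 \<le> \<epsilon>1" "\<epsilon>1 < \<epsilon>2" "\<epsilon>2 \<le> 1/2"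
    and "0 < q" "q < 1"
    and "in_B_star 2 (mix2 q \<sigma>1 \<sigma>2)"
  shows "((\<exists>p. 0 < p \<and> p < 1 \<and> P_degradation 2 (mix2 q \<sigma>1 \<sigma>2) (mix2 p \<epsilon>1 \<epsilon>2))
          \<longleftrightarrow> (\<sigma>1 \<le> \<epsilon>1 \<and> \<epsilon>1 < (1 - q) * \<sigma>1 + q * \<sigma>2 \<and>
               (1 - q) * \<sigma>1 + q * \<sigma>2 < \<epsilon>2 \<and> \<epsilon>2 \<le> \<sigma>2))
       \<and> (\<forall>p. 0 < p \<and> p < 1 \<and> P_degradation 2 (mix2 q \<sigma>1 \<sigma>2) (mix2 p \<epsilon>1 \<epsilon>2)
              \<longrightarrow> (1 - p) * \<epsilon>1 + p * \<epsilon>2 = (1 - q) * \<sigma>1 + q * \<sigma>2)"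
proof -
  define m where "m = (1 - q) * \<sigma>1 + q * \<sigma>2"
  have Q_in_B: "in_B 2 (mix2 q \<sigma>1 \<sigma>2)"
    using assms(9) by (simp add: in_B_star_def)
  have P_degradation_iff_bounds: "P_degradation 2 (mix2 q \<sigma>1 \<sigma>2) (mix2 p \<epsilon>1 \<epsilon>2)
      \<longleftrightarrow> \<sigma>1 \<le> \<epsilon>1 \<and> \<epsilon>2 \<le> \<sigma>2 \<and> (1 - p) * \<epsilon>1 + p * \<epsilon>2 = m"
    if "0 < p" "p < 1" for p
  proof -
    have "P_degradation 2 (mix2 q \<sigma>1 \<sigma>2) (mix2 p \<epsilon>1 \<epsilon>2)
        \<longleftrightarrow> degraded (mix2 p \<epsilon>1 \<epsilon>2) (mix2 q \<sigma>1 \<sigma>2) \<and> (1 - p) * \<epsilon>1 + p * \<epsilon>2 = m"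
      unfolding m_def by (rule mix2_P_degradation_iff[OF Q_in_B]) (use assms that in simp_all)
    moreover have "degraded (mix2 p \<epsilon>1 \<epsilon>2) (mix2 q \<sigma>1 \<sigma>2) \<longleftrightarrow> \<sigma>1 \<le> \<epsilon>1 \<and> \<epsilon>2 \<le> \<sigma>2"
      if "(1 - p) * \<epsilon>1 + p * \<epsilon>2 = m"
      by (rule mix2_degraded_iff_crossover_bounds) (use assms \<open>0 < p\<close> \<open>p < 1\<close> that in \<open>simp_all add: m_def\<close>)
    ultimately show ?thesis by blast
  qed
  have "(\<exists>p. 0 < p \<and> p < 1 \<and> P_degradation 2 (mix2 q \<sigma>1 \<sigma>2) (mix2 p \<epsilon>1 \<epsilon>2))
      \<longleftrightarrow> \<sigma>1 \<le> \<epsilon>1 \<and> \<epsilon>2 \<le> \<sigma>2 \<and> (\<exists>p. 0 < p \<and> p < 1 \<and> (1 - p) * \<epsilon>1 + p * \<epsilon>2 = m)"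
    using P_degradation_iff_bounds by blast
  then show ?thesis
    unfolding m_def[symmetric] between_iff_convex_combination[OF assms(5), symmetric]
    using P_degradation_iff_bounds by auto
qed

end
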